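(* Let $r\in\mathbb{N}$ (so $n=r$), $\alpha>0$, $x_j=(j-1)/n$ and $c_j=x_j^\alpha$ for $j=1,\dots,n+1$. For $\lambda\ge 0$ let $m_j(\lambda)=e^{-\lambda c_j}/z(\lambda)$ with $z(\lambda)=\sum_{k=1}^{n+1}e^{-\lambda c_k}$, and $p_X^{\lambda}=\sum_{j=1}^{n+1}m_j(\lambda)\delta_{x_j}$. Then: (i) for every $\lambda\ge 0$, $i(x_j;p_X^{\lambda})=I(p_X^{\lambda})+\lambda\,\bigl(c_j-\mathbb{E}_{p_X^\lambda}[c(X)]\bigr)$ for all $j=1,\dots,n+1$; (ii) the function $\lambda\mapsto \mathbb{E}_{p_X^{\lambda}}[c(X)]=\sum_j m_j(\lambda)c_j$ satisfies $\frac{d}{d\lambda}\mathbb{E}_{p_X^{\lambda}}[c(X)]=-\mathrm{Var}_{p_X^{\lambda}}(c(X))<0$ on $[0,\infty)$, equals $\bar c^\ast$ at $\lambda=0$ and tends to $0$ as $\lambda\to\infty$. Consequently, for every $\bar c\in(0,\bar c^{\ast}]$ there is a unique $\lambda^{\ast}\ge 0$ with $\mathbb{E}_{p_X^{\lambda^\ast}}[c(X)]=\bar c$, and $p_X^{\lambda^\ast}$ satisfies $i(x;p_X^{\lambda^\ast})=I(p_X^{\lambda^\ast})+\lambda^\ast(c(x)-\bar c)$ for all $x$ in its support.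
   Context: Fix $b>0$ and set $r:=1/(2b)$, $n:=\lfloor r\rfloor$. Consider the additive uniform noise channel $Y=X+N$ with $N\sim\mathrm{Uniform}(-b,b)$ independent of $X$, so the transition density is $p_N(y\mid x)=r\,\mathbf{1}_{x-b<y<x+b}$. Admissible inputs are probability distributions $p_X$ on $[0,1]$. For such $p_X$ the output density is $p_Y(y;p_X)=\int p_N(y\mid x)\,dp_X(x)$, the marginal information density is $i(x;p_X)=\int p_N(y\mid x)\log\frac{p_N(y\mid x)}{p_Y(y;p_X)}\,dy\in[0,\infty]$, and $I(p_X)=\int i(x;p_X)\,dp_X(x)$ is the mutual information. The cost function is $c(x)=x^{\alpha}$. For $r\in\mathbb{N}$ the critical cost is $\bar c^\ast:=\frac{1}{n+1}\sum_{j=1}^{n+1}x_j^\alpha$ with $x_j=(j-1)/n$ (the expected cost under the capacity-achieving input without cost constraint, which is uniform on $\{x_1,\dots,x_{n+1}\}$). *)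

theory Defs
  imports "HOL-Probability.Probability"
begin

text \<open>Additive uniform noise channel Y = X + N, N ~ Uniform(-b,b), r = 1/(2b).\<close>

definition pN :: "real \<Rightarrow> real \<Rightarrow> real \<Rightarrow> real" where
  "pN b y x = (1 / (2 * b)) * (if x - b < y \<and> y < x + b then 1 else 0)"

definition pY :: "real \<Rightarrow> real measure \<Rightarrow> real \<Rightarrow> real" where
  "pY b P y = (\<integral>x. pN b y x \<partial>P)"

text \<open>Marginal information density i(x;P) with values in [0,\<infinity>]; the integrand
  pN log(pN/pY) is taken as 0 where pN = 0 and as \<infinity> where pN > 0 = pY.\<close>
definition info_dens :: "real \<Rightarrow> real measure \<Rightarrow> real \<Rightarrow> ennreal" where
  "info_dens b P x =
     (\<integral>\<^sup>+ y. (if pN b y x = 0 then 0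
               else if pY b P y = 0 then \<infinity>
               else ennreal (pN b y x * ln (pN b y x / pY b P y))) \<partial>lborel)"

definition mutual_info :: "real \<Rightarrow> real measure \<Rightarrow> ennreal" where
  "mutual_info b P = (\<integral>\<^sup>+ x. info_dens b P x \<partial>P)"

definition cost :: "real \<Rightarrow> real \<Rightarrow> real" where
  "cost \<alpha> x = x powr \<alpha>"

definition xpt :: "nat \<Rightarrow> nat \<Rightarrow> real" where
  "xpt n j = real (j - 1) / real n"

definition zfun :: "nat \<Rightarrow> real \<Rightarrow> real \<Rightarrow> real" where
  "zfun n \<alpha> l = (\<Sum>k\<in>{1..n+1}. exp (- l * cost \<alpha> (xpt n k)))"

definition mw :: "nat \<Rightarrow> real \<Rightarrow> real \<Rightarrow> nat \<Rightarrow> real" where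
  "mw n \<alpha> l j = exp (- l * cost \<alpha> (xpt n j)) / zfun n \<alpha> l"

definition pX_lam :: "nat \<Rightarrow> real \<Rightarrow> real \<Rightarrow> real pmf" where
  "pX_lam n \<alpha> l = embed_pmf (\<lambda>x. \<Sum>j\<in>{1..n+1}. if x = xpt n j then mw n \<alpha> l j else 0)"

definition cbar_star :: "nat \<Rightarrow> real \<Rightarrow> real" where
  "cbar_star n \<alpha> = (1 / real (n + 1)) * (\<Sum>j\<in>{1..n+1}. cost \<alpha> (xpt n j))"

end

theory Submission
  imports Defs
begin

text \<open>The mass points \<open>x\<^sub>j = (j-1)/n\<close> are \<open>1/n = 2b\<close> apart, so the noise windows
  \<open>(x\<^sub>j - b, x\<^sub>j + b)\<close> are disjoint and the output reveals the input: on the \<open>j\<close>-th window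
  \<open>p\<^sub>Y = m\<^sub>j/(2b)\<close>, the information density at \<open>x\<^sub>j\<close> is the self-information \<open>-ln m\<^sub>j\<close>, and
  \<open>I\<close> is the entropy of the weights. For Gibbs weights \<open>m\<^sub>j \<propto> exp (-\<lambda> c\<^sub>j)\<close> one has
  \<open>-ln m\<^sub>j = \<lambda> c\<^sub>j + ln z(\<lambda>)\<close>, and averaging gives (i). Part (ii) is the exponential-family
  identity \<open>E' = -Var\<close>; the variance is positive because \<open>c\<^sub>1 = 0 < c\<^sub>2\<close>, so \<open>E\<close> decreases
  strictly from the uniform average \<open>c\<^sup>*\<close> at \<open>\<lambda> = 0\<close> to \<open>0\<close>, the cost of \<open>x\<^sub>1\<close>, where the mass
  concentrates as \<open>\<lambda> \<rightarrow> \<infinity>\<close>; the intermediate value theorem yields \<open>\<lambda>\<^sup>*\<close>.\<close>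

section \<open>Gibbs distributions on a finite set\<close>

definition partition_fun :: "'a set \<Rightarrow> ('a \<Rightarrow> real) \<Rightarrow> real \<Rightarrow> real" where
  "partition_fun I c l = (\<Sum>j\<in>I. exp (- l * c j))"

definition gibbs :: "'a set \<Rightarrow> ('a \<Rightarrow> real) \<Rightarrow> real \<Rightarrow> 'a \<Rightarrow> real" where
  "gibbs I c l j = exp (- l * c j) / partition_fun I c l"

definition gibbs_mean :: "'a set \<Rightarrow> ('a \<Rightarrow> real) \<Rightarrow> real \<Rightarrow> real" where
  "gibbs_mean I c l = (\<Sum>j\<in>I. gibbs I c l j * c j)"

definition gibbs_variance :: "'a set \<Rightarrow> ('a \<Rightarrow> real) \<Rightarrow> real \<Rightarrow> real" where
  "gibbs_variance I c l = (\<Sum>j\<in>I. gibbs I c l j * (c j - gibbs_mean I c l)\<^sup>2)"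

definition gibbs_entropy :: "'a set \<Rightarrow> ('a \<Rightarrow> real) \<Rightarrow> real \<Rightarrow> real" where
  "gibbs_entropy I c l = (\<Sum>j\<in>I. gibbs I c l j * - ln (gibbs I c l j))"

lemma gibbs_mean_eq_sum: "gibbs_mean I c = (\<lambda>l. \<Sum>j\<in>I. gibbs I c l j * c j)"
  by (simp add: fun_eq_iff gibbs_mean_def)

context
  fixes I :: "'a set" and c :: "'a \<Rightarrow> real"
  assumes finite: "finite I" and nonempty: "I \<noteq> {}"
begin

lemma partition_fun_pos: "0 < partition_fun I c l"
  unfolding partition_fun_def using finite nonempty by (intro sum_pos) auto

lemma gibbs_pos: "0 < gibbs I c l j"
  unfolding gibbs_def using partition_fun_pos by simp

lemma sum_gibbs: "(\<Sum>j\<in>I. gibbs I c l j) = 1"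
  using partition_fun_pos[of l]
  by (simp add: gibbs_def partition_fun_def flip: sum_divide_distrib)

lemma gibbs_le_1: "j \<in> I \<Longrightarrow> gibbs I c l j \<le> 1"
  using member_le_sum[of j I "gibbs I c l"] finite gibbs_pos sum_gibbs
  by (simp add: less_imp_le)

lemma neg_ln_gibbs_nonneg: "j \<in> I \<Longrightarrow> 0 \<le> - ln (gibbs I c l j)"
  using gibbs_pos gibbs_le_1 by simp

lemma gibbs_entropy_nonneg: "0 \<le> gibbs_entropy I c l"
  unfolding gibbs_entropy_def
  using gibbs_pos neg_ln_gibbs_nonneg by (intro sum_nonneg mult_nonneg_nonneg) (auto intro: less_imp_le)

lemma neg_ln_gibbs_eq:
  assumes "j \<in> I"
  shows "- ln (gibbs I c l j) = gibbs_entropy I c l + l * (c j - gibbs_mean I c l)"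
proof -
  have ln_gibbs: "ln (gibbs I c l k) = - l * c k - ln (partition_fun I c l)" for k
    using partition_fun_pos[of l] by (simp add: gibbs_def ln_div)
  have "gibbs_entropy I c l
      = l * (\<Sum>k\<in>I. gibbs I c l k * c k) + (\<Sum>k\<in>I. gibbs I c l k) * ln (partition_fun I c l)"
    by (simp add: gibbs_entropy_def ln_gibbs algebra_simps sum.distrib sum_distrib_left sum_distrib_right)
  then show ?thesis
    by (simp add: sum_gibbs ln_gibbs gibbs_mean_def algebra_simps)
qed

lemma has_real_derivative_gibbs:
  "((\<lambda>l. gibbs I c l j) has_real_derivative gibbs I c l j * (gibbs_mean I c l - c j)) (at l)"
proof -
  have Z: "((\<lambda>l. partition_fun I c l) has_real_derivative
      - partition_fun I c l * gibbs_mean I c l) (at l)"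
  proof -
    have "((\<lambda>l. partition_fun I c l) has_real_derivative (\<Sum>k\<in>I. - (exp (- l * c k) * c k))) (at l)"
      unfolding partition_fun_def by (intro DERIV_sum) (auto intro!: derivative_eq_intros)
    moreover have "(\<Sum>k\<in>I. - (exp (- l * c k) * c k)) = - partition_fun I c l * gibbs_mean I c l"
      using partition_fun_pos[of l]
      by (simp add: gibbs_mean_def gibbs_def sum_distrib_left sum_negf)
    ultimately show ?thesis by simp
  qed
  have "((\<lambda>l. gibbs I c l j) has_real_derivative
      ((- c j * exp (- l * c j)) * partition_fun I c l
        - exp (- l * c j) * (- partition_fun I c l * gibbs_mean I c l))
      / (partition_fun I c l * partition_fun I c l)) (at l)"
    unfolding gibbs_def
    by (intro DERIV_divide Z) (auto intro!: derivative_eq_intros simp: partition_fun_pos[THEN less_imp_neq, symmetric])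
  then show ?thesis
    by (rule DERIV_cong) (use partition_fun_pos[of l] in \<open>simp add: gibbs_def field_simps\<close>)
qed

lemma gibbs_variance_eq: "gibbs_variance I c l = (\<Sum>j\<in>I. gibbs I c l j * (c j - gibbs_mean I c l) * c j)"
proof -
  have "(\<Sum>j\<in>I. gibbs I c l j * (c j - gibbs_mean I c l)) = 0"
    by (simp add: algebra_simps sum_subtractf gibbs_mean_def flip: sum_distrib_right) (simp add: sum_gibbs)
  then have "(\<Sum>j\<in>I. gibbs I c l j * (c j - gibbs_mean I c l) * gibbs_mean I c l) = 0"
    by (simp flip: sum_distrib_right)
  moreover have "gibbs_variance I c l = (\<Sum>j\<in>I. gibbs I c l j * (c j - gibbs_mean I c l) * c j)
      - (\<Sum>j\<in>I. gibbs I c l j * (c j - gibbs_mean I c l) * gibbs_mean I c l)"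
    unfolding gibbs_variance_def sum_subtractf[symmetric]
    by (rule sum.cong) (simp_all add: power2_eq_square algebra_simps)
  ultimately show ?thesis by simp
qed

lemma has_real_derivative_gibbs_mean:
  "(gibbs_mean I c has_real_derivative - gibbs_variance I c l) (at l)"
proof -
  have "((\<lambda>l. \<Sum>j\<in>I. gibbs I c l j * c j) has_real_derivative
      (\<Sum>j\<in>I. gibbs I c l j * (gibbs_mean I c l - c j) * c j)) (at l)"
    by (intro DERIV_sum DERIV_cmult_right has_real_derivative_gibbs)
  then show ?thesis
    unfolding gibbs_mean_eq_sum[symmetric]
    by (simp add: gibbs_variance_eq algebra_simps flip: sum_negf)
qed

lemma gibbs_variance_pos:
  assumes "j \<in> I" "k \<in> I" "c j \<noteq> c k"
  shows "0 < gibbs_variance I c l"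
proof -
  have nonneg: "\<forall>i\<in>I. 0 \<le> gibbs I c l i * (c i - gibbs_mean I c l)\<^sup>2"
    using gibbs_pos by (simp add: less_imp_le)
  obtain i where "i \<in> I" "c i \<noteq> gibbs_mean I c l"
    using assms by metis
  then have "0 < gibbs I c l i * (c i - gibbs_mean I c l)\<^sup>2"
    using gibbs_pos by simp
  also have "\<dots> \<le> gibbs_variance I c l"
    unfolding gibbs_variance_def using \<open>i \<in> I\<close> finite nonneg by (intro member_le_sum) auto
  finally show ?thesis .
qed

lemma gibbs_mean_0: "gibbs_mean I c 0 = (\<Sum>j\<in>I. c j) / card I"
  by (simp add: gibbs_mean_def gibbs_def partition_fun_def sum_divide_distrib)

lemma tendsto_gibbs_mean_at_top:
  assumes nonneg: "\<forall>j\<in>I. 0 \<le> c j" and "j\<^sub>0 \<in> I" "c j\<^sub>0 = 0"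
  shows "(gibbs_mean I c \<longlongrightarrow> 0) at_top"
proof -
  have Z_ge_1: "1 \<le> partition_fun I c l" for l
    using member_le_sum[of j\<^sub>0 I "\<lambda>j. exp (- l * c j)"] assms finite
    by (simp add: partition_fun_def)
  have "((\<lambda>l. gibbs I c l j * c j) \<longlongrightarrow> 0) at_top" if "j \<in> I" for j
  proof (cases "c j = 0")
    case False
    then have "0 < c j" using nonneg that by (simp add: less_le)
    have "filterlim (\<lambda>l. l * c j) at_top at_top"
      using filterlim_tendsto_pos_mult_at_top[OF tendsto_const \<open>0 < c j\<close> filterlim_ident]
      by (simp add: mult.commute)
    then have "filterlim (\<lambda>l. - l * c j) at_bot at_top"
      by (simp add: filterlim_uminus_at_top)
    then have upper: "((\<lambda>l. exp (- l * c j) * c j) \<longlongrightarrow> 0) at_top"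
      using filterlim_compose[OF exp_at_bot] tendsto_mult_left_zero by blast
    have "gibbs I c l j * c j \<le> exp (- l * c j) * c j" for l
      using Z_ge_1[of l] \<open>0 < c j\<close> partition_fun_pos[of l]
      by (simp add: gibbs_def divide_le_eq mult_le_cancel_right)
    moreover have "0 \<le> gibbs I c l j * c j" for l
      using gibbs_pos[of l j] \<open>0 < c j\<close> by simp
    ultimately show ?thesis
      by (intro tendsto_sandwich[OF _ _ tendsto_const upper] always_eventually allI)
  qed simp
  then have "((\<lambda>l. \<Sum>j\<in>I. gibbs I c l j * c j) \<longlongrightarrow> (\<Sum>j\<in>I. 0)) at_top"
    by (rule tendsto_sum)
  then show ?thesis
    unfolding gibbs_mean_eq_sum by simp
qed

end

lemma ex1_preimage_of_decreasing:
  fixes f f' :: "real \<Rightarrow> real"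
  assumes deriv: "\<And>x. (f has_real_derivative f' x) (at x)" and neg: "\<And>x. f' x < 0"
    and lim: "(f \<longlongrightarrow> L) at_top" and "L < y" "y \<le> f a"
  shows "\<exists>!x. a \<le> x \<and> f x = y"
proof -
  have decreasing: "f u < f v" if "v < u" for u v
    using that by (rule DERIV_neg_imp_decreasing) (use deriv neg in blast)
  obtain B where B: "\<And>x. B \<le> x \<Longrightarrow> f x < y"
    using order_tendstoD(2)[OF lim \<open>L < y\<close>] by (auto simp: eventually_at_top_linorder)
  have "continuous_on {a..max a B} f"
    using deriv by (intro DERIV_continuous_on) (rule has_field_derivative_at_within)
  moreover have "f (max a B) \<le> y"
    using B[of "max a B"] by simp
  ultimately obtain x where "a \<le> x" "f x = y"
    using IVT2'[of f "max a B" y a] \<open>y \<le> f a\<close> by auto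
  moreover have "x' = x" if "a \<le> x'" "f x' = y" for x'
    using decreasing[of x x'] decreasing[of x' x] that \<open>f x = y\<close> by (cases x x' rule: linorder_cases) auto
  ultimately show ?thesis by blast
qed

section \<open>Uniform noise channel with well-separated inputs\<close>

definition separated :: "real \<Rightarrow> real set \<Rightarrow> bool" where
  "separated d S \<longleftrightarrow> (\<forall>x\<in>S. \<forall>x'\<in>S. x \<noteq> x' \<longrightarrow> d \<le> \<bar>x - x'\<bar>)"

lemma pY_separated:
  assumes "0 < b" and sep: "separated (2 * b) (set_pmf P)" and "x \<in> set_pmf P"
    and "x - b < y" "y < x + b"
  shows "pY b P y = pmf P x / (2 * b)"
proof -
  have "pN b y x' = indicator {x} x' / (2 * b)" if "x' \<in> set_pmf P" for x'
  proof (cases "x' = x")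
    case False
    then have "2 * b \<le> \<bar>x - x'\<bar>"
      using sep that \<open>x \<in> set_pmf P\<close> unfolding separated_def by simp
    then have "\<not> (x' - b < y \<and> y < x' + b)"
      using assms(4,5) by (auto simp: abs_if split: if_splits)
    then show ?thesis using False by (simp add: pN_def)
  qed (use assms in \<open>simp add: pN_def\<close>)
  then have "pY b P y = (\<integral>x'. indicator {x} x' / (2 * b) \<partial>P)"
    unfolding pY_def by (intro integral_cong_AE) (simp_all add: AE_measure_pmf_iff)
  then show ?thesis
    by (simp add: measure_pmf_single)
qed

lemma info_dens_separated:
  assumes "0 < b" and sep: "separated (2 * b) (set_pmf P)" and "x \<in> set_pmf P"
  shows "info_dens b P x = ennreal (- ln (pmf P x))"
proof -
  have "0 < pmf P x" using \<open>x \<in> set_pmf P\<close> by (simp add: pmf_positive)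
  then have self_info_nonneg: "0 \<le> - ln (pmf P x)" by (simp add: pmf_le_1)
  have integrand: "(if pN b y x = 0 then 0 else if pY b P y = 0 then \<infinity>
        else ennreal (pN b y x * ln (pN b y x / pY b P y)))
      = ennreal (- ln (pmf P x) / (2 * b)) * indicator {x - b <..< x + b} y" for y
  proof (cases "x - b < y \<and> y < x + b")
    case True
    then have "pY b P y = pmf P x / (2 * b)" using pY_separated assms by blast
    moreover have "ln ((1 / (2 * b)) / (pmf P x / (2 * b))) = - ln (pmf P x)"
      using \<open>0 < b\<close> \<open>0 < pmf P x\<close> by (simp add: ln_div)
    ultimately show ?thesis
      using True \<open>0 < b\<close> \<open>0 < pmf P x\<close> by (simp add: pN_def)
  qed (auto simp: pN_def)
  have "info_dens b P x = ennreal (- ln (pmf P x) / (2 * b)) * ennreal (2 * b)"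
    unfolding info_dens_def integrand using \<open>0 < b\<close> by (simp add: nn_integral_cmult_indicator)
  also have "\<dots> = ennreal (- ln (pmf P x) / (2 * b) * (2 * b))"
    using \<open>0 < b\<close> self_info_nonneg by (intro ennreal_mult[symmetric]) (auto simp: divide_nonpos_pos)
  also have "\<dots> = ennreal (- ln (pmf P x))"
    using \<open>0 < b\<close> by simp
  finally show ?thesis .
qed

lemma mutual_info_separated:
  assumes "0 < b" and "separated (2 * b) (set_pmf P)"
  shows "mutual_info b P = (\<integral>\<^sup>+x. ennreal (- ln (pmf P x)) \<partial>P)"
  unfolding mutual_info_def using info_dens_separated[OF assms]
  by (intro nn_integral_cong_AE) (simp add: AE_measure_pmf_iff)

section \<open>The inputs \<open>p\<^sub>X\<^sup>\<lambda>\<close>\<close>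

lemma pmf_embed_point_masses:
  fixes x :: "'a \<Rightarrow> 'b" and w :: "'a \<Rightarrow> real"
  assumes "finite I" "inj_on x I" "\<And>j. j \<in> I \<Longrightarrow> 0 \<le> w j" "sum w I = 1"
  shows "pmf (embed_pmf (\<lambda>y. \<Sum>j\<in>I. if y = x j then w j else 0))
    = (\<lambda>y. \<Sum>j\<in>I. if y = x j then w j else 0)"
proof (rule ext, rule pmf_embed_pmf)
  let ?f = "\<lambda>y. \<Sum>j\<in>I. if y = x j then w j else 0"
  have at_point: "?f (x k) = w k" if "k \<in> I" for k
    using that \<open>inj_on x I\<close> \<open>finite I\<close> by (auto simp: inj_on_eq_iff sum.delta' cong: if_cong)
  have "(\<integral>\<^sup>+y. ?f y \<partial>count_space UNIV) = (\<Sum>y\<in>x ` I. ennreal (?f y))"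
    using \<open>finite I\<close> by (intro nn_integral_count_space') (auto intro!: sum.neutral simp: image_iff)
  also have "\<dots> = ennreal (\<Sum>j\<in>I. w j)"
    using assms by (simp add: sum.reindex at_point sum_ennreal)
  finally show "(\<integral>\<^sup>+y. ?f y \<partial>count_space UNIV) = 1"
    using assms by simp
qed (use assms in \<open>auto intro: sum_nonneg\<close>)

lemma one_le_n_of_noise_width:
  assumes "0 < b" "1 / (2 * b) = real n"
  shows "1 \<le> n"
proof -
  have "0 < 1 / (2 * b)" using \<open>0 < b\<close> by simp
  then show ?thesis using assms(2) by simp
qed

lemma inj_on_xpt: "1 \<le> n \<Longrightarrow> inj_on (xpt n) {1..n+1}"
  unfolding inj_on_def xpt_def by auto

lemma separated_xpt:
  assumes "1 \<le> n"
  shows "separated (1 / real n) (xpt n ` {1..n+1})"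
  unfolding separated_def
proof (intro ballI impI)
  fix y y' assume "y \<in> xpt n ` {1..n+1}" "y' \<in> xpt n ` {1..n+1}" "y \<noteq> y'"
  then obtain j k where jk: "j \<in> {1..n+1}" "k \<in> {1..n+1}" "y = xpt n j" "y' = xpt n k" "j \<noteq> k"
    by blast
  then have "\<bar>y - y'\<bar> = \<bar>real j - real k\<bar> / real n"
    by (simp add: xpt_def of_nat_diff abs_divide flip: diff_divide_distrib)
  moreover have "1 \<le> \<bar>real j - real k\<bar>" using \<open>j \<noteq> k\<close> by linarith
  ultimately show "1 / real n \<le> \<bar>y - y'\<bar>"
    using assms by (simp add: divide_right_mono)
qed

(* Otherwise simp splits off the last term of every sum over {1..n+1}. *)
declare sum.cl_ivl_Suc [simp del]

lemma mw_eq_gibbs: "mw n \<alpha> l = gibbs {1..n+1} (\<lambda>j. cost \<alpha> (xpt n j)) l"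
  by (simp add: fun_eq_iff mw_def gibbs_def partition_fun_def zfun_def)

lemma pmf_pX_lam:
  assumes "1 \<le> n"
  shows "pmf (pX_lam n \<alpha> l) = (\<lambda>x. \<Sum>j\<in>{1..n+1}. if x = xpt n j then mw n \<alpha> l j else 0)"
  unfolding pX_lam_def mw_eq_gibbs using inj_on_xpt[OF assms]
  by (intro pmf_embed_point_masses) (auto simp: sum_gibbs gibbs_pos less_imp_le)

lemma pmf_pX_lam_xpt:
  assumes "1 \<le> n" "j \<in> {1..n+1}"
  shows "pmf (pX_lam n \<alpha> l) (xpt n j) = mw n \<alpha> l j"
  using assms inj_on_xpt[OF assms(1)]
  by (auto simp: pmf_pX_lam inj_on_eq_iff sum.delta' cong: if_cong)

lemma set_pmf_pX_lam:
  assumes "1 \<le> n"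
  shows "set_pmf (pX_lam n \<alpha> l) = xpt n ` {1..n+1}"
proof -
  have "pmf (pX_lam n \<alpha> l) x = 0" if "x \<notin> xpt n ` {1..n+1}" for x
    using that assms by (auto simp: pmf_pX_lam intro!: sum.neutral)
  moreover have "pmf (pX_lam n \<alpha> l) (xpt n j) \<noteq> 0" if "j \<in> {1..n+1}" for j
    using that assms by (simp add: pmf_pX_lam_xpt mw_eq_gibbs gibbs_pos less_imp_neq[symmetric])
  ultimately show ?thesis
    by (auto simp: set_pmf_eq)
qed

lemma sum_support_pX_lam:
  assumes "1 \<le> n"
  shows "(\<Sum>x\<in>xpt n ` {1..n+1}. h x * f (pmf (pX_lam n \<alpha> l) x))
    = (\<Sum>j\<in>{1..n+1}. h (xpt n j) * f (mw n \<alpha> l j))"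
proof -
  have "(\<Sum>x\<in>xpt n ` {1..n+1}. h x * f (pmf (pX_lam n \<alpha> l) x))
      = (\<Sum>j\<in>{1..n+1}. h (xpt n j) * f (pmf (pX_lam n \<alpha> l) (xpt n j)))"
    by (rule sum.reindex[OF inj_on_xpt[OF assms], unfolded comp_def])
  also have "\<dots> = (\<Sum>j\<in>{1..n+1}. h (xpt n j) * f (mw n \<alpha> l j))"
    using assms by (intro sum.cong) (simp_all add: pmf_pX_lam_xpt)
  finally show ?thesis .
qed

lemma expectation_pX_lam:
  assumes "1 \<le> n"
  shows "measure_pmf.expectation (pX_lam n \<alpha> l) g = (\<Sum>j\<in>{1..n+1}. g (xpt n j) * mw n \<alpha> l j)"
proof -
  have "measure_pmf.expectation (pX_lam n \<alpha> l) g
      = (\<Sum>x\<in>xpt n ` {1..n+1}. g x * pmf (pX_lam n \<alpha> l) x)"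
    by (rule integral_measure_pmf_real) (auto simp: set_pmf_pX_lam[OF assms])
  then show ?thesis
    using sum_support_pX_lam[OF assms, of g "\<lambda>p. p"] by simp
qed

lemma nn_integral_pX_lam:
  assumes "1 \<le> n"
  shows "(\<integral>\<^sup>+x. h x \<partial>measure_pmf (pX_lam n \<alpha> l)) = (\<Sum>j\<in>{1..n+1}. h (xpt n j) * ennreal (mw n \<alpha> l j))"
proof -
  have "(\<integral>\<^sup>+x. h x \<partial>measure_pmf (pX_lam n \<alpha> l))
      = (\<Sum>x\<in>xpt n ` {1..n+1}. h x * ennreal (pmf (pX_lam n \<alpha> l) x))"
    by (rule nn_integral_measure_pmf_support) (auto simp: set_pmf_pX_lam[OF assms])
  then show ?thesis
    using sum_support_pX_lam[OF assms, of h ennreal] by simp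
qed

lemma expectation_cost_pX_lam:
  "1 \<le> n \<Longrightarrow> measure_pmf.expectation (pX_lam n \<alpha> l) (cost \<alpha>)
    = gibbs_mean {1..n+1} (\<lambda>j. cost \<alpha> (xpt n j)) l"
  by (simp add: expectation_pX_lam gibbs_mean_def mw_eq_gibbs mult.commute)

lemma variance_cost_pX_lam:
  "1 \<le> n \<Longrightarrow> measure_pmf.variance (pX_lam n \<alpha> l) (cost \<alpha>)
    = gibbs_variance {1..n+1} (\<lambda>j. cost \<alpha> (xpt n j)) l"
  by (simp add: expectation_pX_lam gibbs_variance_def gibbs_mean_def mw_eq_gibbs mult.commute)

lemma separated_pX_lam:
  assumes "0 < b" "1 / (2 * b) = real n"
  shows "separated (2 * b) (set_pmf (pX_lam n \<alpha> l))"
proof -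
  have "2 * b = 1 / real n" using assms by (simp flip: assms(2))
  then show ?thesis
    using separated_xpt one_le_n_of_noise_width[OF assms] by (simp add: set_pmf_pX_lam)
qed

lemma info_dens_pX_lam:
  assumes "0 < b" "1 / (2 * b) = real n" "j \<in> {1..n+1}"
  shows "info_dens b (pX_lam n \<alpha> l) (xpt n j) = ennreal (- ln (mw n \<alpha> l j))"
proof -
  have "1 \<le> n" using one_le_n_of_noise_width[OF assms(1,2)] .
  then have "xpt n j \<in> set_pmf (pX_lam n \<alpha> l)"
    using assms(3) by (simp add: set_pmf_pX_lam)
  then show ?thesis
    using info_dens_separated[OF assms(1) separated_pX_lam[OF assms(1,2)]]
    by (simp add: pmf_pX_lam_xpt[OF \<open>1 \<le> n\<close> assms(3)])
qed

lemma mutual_info_pX_lam: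
  assumes "0 < b" "1 / (2 * b) = real n"
  shows "mutual_info b (pX_lam n \<alpha> l) = ennreal (gibbs_entropy {1..n+1} (\<lambda>j. cost \<alpha> (xpt n j)) l)"
proof -
  let ?g = "gibbs {1..n+1} (\<lambda>j. cost \<alpha> (xpt n j)) l"
  have "mutual_info b (pX_lam n \<alpha> l) = (\<Sum>j\<in>{1..n+1}. ennreal (- ln (?g j)) * ennreal (?g j))"
    using assms one_le_n_of_noise_width[OF assms]
    by (simp add: mutual_info_separated separated_pX_lam nn_integral_pX_lam pmf_pX_lam_xpt mw_eq_gibbs)
  also have "\<dots> = (\<Sum>j\<in>{1..n+1}. ennreal (?g j * - ln (?g j)))"
  proof (rule sum.cong)
    fix j assume "j \<in> {1..n+1}"
    then have "0 \<le> - ln (?g j)" by (intro neg_ln_gibbs_nonneg) auto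
    then show "ennreal (- ln (?g j)) * ennreal (?g j) = ennreal (?g j * - ln (?g j))"
      using gibbs_pos[of "{1..n+1}"] by (simp add: ennreal_mult[symmetric] less_imp_le mult.commute)
  qed simp
  also have "\<dots> = ennreal (gibbs_entropy {1..n+1} (\<lambda>j. cost \<alpha> (xpt n j)) l)"
    unfolding gibbs_entropy_def
    by (intro sum_ennreal mult_nonneg_nonneg less_imp_le[OF gibbs_pos] neg_ln_gibbs_nonneg) auto
  finally show ?thesis .
qed

lemma info_dens_pX_lam_equalization:
  assumes "0 < b" "1 / (2 * b) = real n" "j \<in> {1..n+1}"
  shows "mutual_info b (pX_lam n \<alpha> l) < \<infinity> \<and>
    enn2ereal (info_dens b (pX_lam n \<alpha> l) (xpt n j)) = enn2ereal (mutual_info b (pX_lam n \<alpha> l))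
      + ereal (l * (cost \<alpha> (xpt n j) - measure_pmf.expectation (pX_lam n \<alpha> l) (cost \<alpha>)))"
proof -
  let ?I = "{1..n+1}" and ?c = "\<lambda>j. cost \<alpha> (xpt n j)"
  have "- ln (gibbs ?I ?c l j) = gibbs_entropy ?I ?c l + l * (?c j - gibbs_mean ?I ?c l)"
    using assms(3) by (intro neg_ln_gibbs_eq) auto
  moreover have "0 \<le> - ln (gibbs ?I ?c l j)"
    using assms(3) by (intro neg_ln_gibbs_nonneg) auto
  moreover have "0 \<le> gibbs_entropy ?I ?c l"
    by (intro gibbs_entropy_nonneg) auto
  ultimately show ?thesis
    using assms one_le_n_of_noise_width[OF assms(1,2)]
    by (simp add: info_dens_pX_lam mutual_info_pX_lam expectation_cost_pX_lam mw_eq_gibbs)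
qed

theorem mainTheorem4:
  fixes b \<alpha> :: real and n :: nat
  assumes hb: "b > 0"
    and hr: "1 / (2 * b) = real n"
    and h\<alpha>: "\<alpha> > 0"
  defines "E \<equiv> (\<lambda>l. measure_pmf.expectation (pX_lam n \<alpha> l) (cost \<alpha>))"
  shows
    "(\<forall>l\<ge>0. \<forall>j\<in>{1..n+1}.
        mutual_info b (measure_pmf (pX_lam n \<alpha> l)) < \<infinity> \<and>
        enn2ereal (info_dens b (measure_pmf (pX_lam n \<alpha> l)) (xpt n j)) =
          enn2ereal (mutual_info b (measure_pmf (pX_lam n \<alpha> l)))
          + ereal (l * (cost \<alpha> (xpt n j) - E l)))
   \<and> (\<forall>l. E l = (\<Sum>j\<in>{1..n+1}. mw n \<alpha> l j * cost \<alpha> (xpt n j)))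
   \<and> (\<forall>l\<ge>0. (E has_real_derivative
                 (- measure_pmf.variance (pX_lam n \<alpha> l) (cost \<alpha>))) (at l within {0..})
            \<and> - measure_pmf.variance (pX_lam n \<alpha> l) (cost \<alpha>) < 0)
   \<and> E 0 = cbar_star n \<alpha>
   \<and> (E \<longlongrightarrow> 0) at_top
   \<and> (\<forall>cb. 0 < cb \<and> cb \<le> cbar_star n \<alpha> \<longrightarrow>
        (\<exists>!ls. ls \<ge> 0 \<and> E ls = cb) \<and>
        (\<forall>ls. ls \<ge> 0 \<and> E ls = cb \<longrightarrow>
           (\<forall>x\<in>set_pmf (pX_lam n \<alpha> ls).
              mutual_info b (measure_pmf (pX_lam n \<alpha> ls)) < \<infinity> \<and>
              enn2ereal (info_dens b (measure_pmf (pX_lam n \<alpha> ls)) x) =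
                enn2ereal (mutual_info b (measure_pmf (pX_lam n \<alpha> ls)))
                + ereal (ls * (cost \<alpha> x - cb)))))"
proof -
  define I where "I = {1..n+1}"
  define c where "c = (\<lambda>j. cost \<alpha> (xpt n j))"
  have n: "1 \<le> n" using one_le_n_of_noise_width[OF hb hr] .
  have fin: "finite I" "I \<noteq> {}" by (simp_all add: I_def)
  have E_eq: "E = gibbs_mean I c"
    using expectation_cost_pX_lam[OF n] by (auto simp: E_def I_def c_def)
  have var_eq: "measure_pmf.variance (pX_lam n \<alpha> l) (cost \<alpha>) = gibbs_variance I c l" for l
    using variance_cost_pX_lam[OF n] by (simp add: I_def c_def)
  have var_pos: "0 < gibbs_variance I c l" for l
    using gibbs_variance_pos[OF fin, of 1 2] n h\<alpha> by (simp add: I_def c_def cost_def xpt_def)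
  have deriv: "(E has_real_derivative - gibbs_variance I c l) (at l)" for l
    unfolding E_eq using has_real_derivative_gibbs_mean[OF fin] .
  have E_0: "E 0 = cbar_star n \<alpha>"
    using gibbs_mean_0[OF fin] by (simp add: E_eq cbar_star_def I_def c_def)
  have E_lim: "(E \<longlongrightarrow> 0) at_top"
    unfolding E_eq using fin by (intro tendsto_gibbs_mean_at_top[of _ _ 1]) (auto simp: I_def c_def cost_def xpt_def)
  have info: "\<And>l j. j \<in> {1..n+1} \<Longrightarrow> mutual_info b (pX_lam n \<alpha> l) < \<infinity> \<and>
      enn2ereal (info_dens b (pX_lam n \<alpha> l) (xpt n j)) = enn2ereal (mutual_info b (pX_lam n \<alpha> l))
        + ereal (l * (cost \<alpha> (xpt n j) - E l))"
    unfolding E_def using info_dens_pX_lam_equalization[OF hb hr] .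
  have unique: "\<exists>!ls. ls \<ge> 0 \<and> E ls = cb" if "0 < cb" "cb \<le> cbar_star n \<alpha>" for cb
    using ex1_preimage_of_decreasing[OF deriv _ E_lim, of cb 0] var_pos that E_0 by simp
  show ?thesis
    using info unique E_0 E_lim deriv var_pos
    by (auto simp: var_eq E_eq gibbs_mean_def mw_eq_gibbs set_pmf_pX_lam[OF n] I_def c_def mult.commute
        intro: has_field_derivative_at_within)
qed

end
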